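(* Assume that (H1)-(H2) hold and $\widetilde{\mathcal{L}}$ is compact. For all $g_0\in E^2(p,w)$ such that $\mathbb{E}_p[g_0e_1w]\neq 0$, we have $$\lim_{n\rightarrow\infty}\frac{\mathrm{Var}_p\left[I\widetilde{\mathcal{L}}^ng_0\right]}{\mathbb{E}_p\left[\left|\widetilde{\mathcal{L}}^ng_0\right|^2 w\right]}=C(p,w).$$
   Context: Let $-\infty\le a<b\le\infty$, let $p$ be a probability density on $]a,b[$ with $p>0$ a.e., and $w\in L^1_{\text{loc}}(]a,b[)$ a weight with $w>0$ a.e. and $pw\in L^1_{\text{loc}}(]a,b[)$. Let $P(x)=\int_a^x p$, $\bar P=1-P$, $K(x,y)=P(x\wedge y)\bar P(x\vee y)$. $H^1(p,w)$ is the set of weakly differentiable $h\in L^2(p)$ with $h'\in L^2(pw)$; $C(p,w)$ is the smallest $C$ with $\mathrm{Var}_p[h]\le C\,\mathbb{E}_p[|h'|^2w]$ for all $h\in H^1(p,w)$. Hypotheses: (H1) $C(p,w)<\infty$; (H2) $L^2(pw)\subset L^1_{\text{loc}}(]a,b[)$. $E^2(p,w)=\{f\in L^2(pw)\cap L^1_{\text{loc}}: x\mapsto\int_{x_0}^x f\in L^2(p)\}$ with the $L^2(pw)$ norm, and $If=\int_{x_0}^{\cdot}f-\mathbb{E}_p[\int_{x_0}^{\cdot}f]$. The operator $\widetilde{\mathcal{L}} f(x)=\frac{1}{p(x)w(x)}\int_a^b K(x,y)f(y)\,dy$ on $E^2(p,w)$, iterated as $\widetilde{\mathcal{L}}^{n+1}=\widetilde{\mathcal{L}}(\widetilde{\mathcal{L}}^n)$.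 When $\widetilde{\mathcal{L}}$ is compact, its eigenvalues $\kappa_1\ge\kappa_2\ge\dots>0$ tend to $0$ with $\kappa_1=C(p,w)$, and there is an orthonormal basis of $E^2(p,w)$ of eigenvectors $e_i$; $e_1$ is the (a.e. positive) eigenvector for $\kappa_1$. *)

theory Defs
  imports "HOL-Analysis.Analysis"
begin

definition Ivl :: "ereal \<Rightarrow> ereal \<Rightarrow> real set" where
  "Ivl a b = {x. a < ereal x \<and> ereal x < b}"

definition loc_int :: "ereal \<Rightarrow> ereal \<Rightarrow> (real \<Rightarrow> real) \<Rightarrow> bool" where
  "loc_int a b f \<longleftrightarrow> f \<in> borel_measurable lborel \<and>
     (\<forall>c d. a < ereal c \<and> ereal d < b \<longrightarrow> set_integrable lborel {c..d} f)"

definition prob_density :: "ereal \<Rightarrow> ereal \<Rightarrow> (real \<Rightarrow> real) \<Rightarrow> bool" where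
  "prob_density a b p \<longleftrightarrow> p \<in> borel_measurable lborel \<and> (\<forall>x\<in>Ivl a b. 0 \<le> p x) \<and>
     set_integrable lborel (Ivl a b) p \<and> (LINT x:Ivl a b|lborel. p x) = 1 \<and>
     (AE x in lborel. x \<in> Ivl a b \<longrightarrow> 0 < p x)"

definition weight :: "ereal \<Rightarrow> ereal \<Rightarrow> (real \<Rightarrow> real) \<Rightarrow> (real \<Rightarrow> real) \<Rightarrow> bool" where
  "weight a b p w \<longleftrightarrow> loc_int a b w \<and> (AE x in lborel. x \<in> Ivl a b \<longrightarrow> 0 < w x) \<and>
     loc_int a b (\<lambda>x. p x * w x)"

definition L2 :: "ereal \<Rightarrow> ereal \<Rightarrow> (real \<Rightarrow> real) \<Rightarrow> (real \<Rightarrow> real) \<Rightarrow> bool" where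
  "L2 a b q f \<longleftrightarrow> f \<in> borel_measurable lborel \<and>
     set_integrable lborel (Ivl a b) (\<lambda>x. (f x)\<^sup>2 * q x)"

definition Ep :: "ereal \<Rightarrow> ereal \<Rightarrow> (real \<Rightarrow> real) \<Rightarrow> (real \<Rightarrow> real) \<Rightarrow> real" where
  "Ep a b p f = (LINT x:Ivl a b|lborel. f x * p x)"

definition Varp :: "ereal \<Rightarrow> ereal \<Rightarrow> (real \<Rightarrow> real) \<Rightarrow> (real \<Rightarrow> real) \<Rightarrow> real" where
  "Varp a b p h = Ep a b p (\<lambda>x. (h x - Ep a b p h)\<^sup>2)"

text \<open>Test functions: C^infinity functions whose support has compact closure inside ]a,b[.
  The list of derivatives D is given explicitly: D 0 = phi, D (k+1) = (D k)'.\<close>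
definition test_fun :: "ereal \<Rightarrow> ereal \<Rightarrow> (nat \<Rightarrow> real \<Rightarrow> real) \<Rightarrow> bool" where
  "test_fun a b D \<longleftrightarrow> (\<forall>k x. (D k has_real_derivative D (Suc k) x) (at x)) \<and>
     compact (closure {x. D 0 x \<noteq> 0}) \<and> closure {x. D 0 x \<noteq> 0} \<subseteq> Ivl a b"

definition weak_deriv :: "ereal \<Rightarrow> ereal \<Rightarrow> (real \<Rightarrow> real) \<Rightarrow> (real \<Rightarrow> real) \<Rightarrow> bool" where
  "weak_deriv a b h h' \<longleftrightarrow> loc_int a b h \<and> loc_int a b h' \<and>
     (\<forall>D. test_fun a b D \<longrightarrow>
        (LINT x:Ivl a b|lborel. h x * D 1 x) = - (LINT x:Ivl a b|lborel. h' x * D 0 x))"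

definition in_H1 :: "ereal \<Rightarrow> ereal \<Rightarrow> (real \<Rightarrow> real) \<Rightarrow> (real \<Rightarrow> real)
    \<Rightarrow> (real \<Rightarrow> real) \<Rightarrow> (real \<Rightarrow> real) \<Rightarrow> bool" where
  "in_H1 a b p w h h' \<longleftrightarrow> L2 a b p h \<and> weak_deriv a b h h' \<and> L2 a b (\<lambda>x. p x * w x) h'"

definition poincare_consts :: "ereal \<Rightarrow> ereal \<Rightarrow> (real \<Rightarrow> real) \<Rightarrow> (real \<Rightarrow> real) \<Rightarrow> real set" where
  "poincare_consts a b p w = {C. 0 \<le> C \<and> (\<forall>h h'. in_H1 a b p w h h' \<longrightarrow>
       Varp a b p h \<le> C * Ep a b p (\<lambda>x. \<bar>h' x\<bar>\<^sup>2 * w x))}"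

definition Cpw :: "ereal \<Rightarrow> ereal \<Rightarrow> (real \<Rightarrow> real) \<Rightarrow> (real \<Rightarrow> real) \<Rightarrow> real" where
  "Cpw a b p w = Inf (poincare_consts a b p w)"

text \<open>(H1): C(p,w) < infinity.\<close>
definition H1 :: "ereal \<Rightarrow> ereal \<Rightarrow> (real \<Rightarrow> real) \<Rightarrow> (real \<Rightarrow> real) \<Rightarrow> bool" where
  "H1 a b p w \<longleftrightarrow> poincare_consts a b p w \<noteq> {}"

definition H2 :: "ereal \<Rightarrow> ereal \<Rightarrow> (real \<Rightarrow> real) \<Rightarrow> (real \<Rightarrow> real) \<Rightarrow> bool" where
  "H2 a b p w \<longleftrightarrow> (\<forall>f. L2 a b (\<lambda>x. p x * w x) f \<longrightarrow> loc_int a b f)"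

definition prim :: "real \<Rightarrow> (real \<Rightarrow> real) \<Rightarrow> real \<Rightarrow> real" where
  "prim x0 f x = (LBINT t=ereal x0..ereal x. f t)"

definition E2 :: "ereal \<Rightarrow> ereal \<Rightarrow> (real \<Rightarrow> real) \<Rightarrow> (real \<Rightarrow> real) \<Rightarrow> real \<Rightarrow> (real \<Rightarrow> real) set" where
  "E2 a b p w x0 = {f. L2 a b (\<lambda>x. p x * w x) f \<and> loc_int a b f \<and> L2 a b p (prim x0 f)}"

definition normsq_pw :: "ereal \<Rightarrow> ereal \<Rightarrow> (real \<Rightarrow> real) \<Rightarrow> (real \<Rightarrow> real) \<Rightarrow> (real \<Rightarrow> real) \<Rightarrow> real" where
  "normsq_pw a b p w f = (LINT x:Ivl a b|lborel. (f x)\<^sup>2 * (p x * w x))"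

definition Iop :: "ereal \<Rightarrow> ereal \<Rightarrow> (real \<Rightarrow> real) \<Rightarrow> real \<Rightarrow> (real \<Rightarrow> real) \<Rightarrow> real \<Rightarrow> real" where
  "Iop a b p x0 f x = prim x0 f x - Ep a b p (prim x0 f)"

definition cdf :: "ereal \<Rightarrow> ereal \<Rightarrow> (real \<Rightarrow> real) \<Rightarrow> real \<Rightarrow> real" where
  "cdf a b p x = (LINT t:{t\<in>Ivl a b. t \<le> x}|lborel. p t)"

definition Kker :: "ereal \<Rightarrow> ereal \<Rightarrow> (real \<Rightarrow> real) \<Rightarrow> real \<Rightarrow> real \<Rightarrow> real" where
  "Kker a b p x y = cdf a b p (min x y) * (1 - cdf a b p (max x y))"

definition Ltil :: "ereal \<Rightarrow> ereal \<Rightarrow> (real \<Rightarrow> real) \<Rightarrow> (real \<Rightarrow> real) \<Rightarrow> (real \<Rightarrow> real) \<Rightarrow> real \<Rightarrow> real" where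
  "Ltil a b p w f x = (LINT y:Ivl a b|lborel. Kker a b p x y * f y) / (p x * w x)"

text \<open>L tilde is a compact operator on E^2(p,w): it maps E^2(p,w) into itself, and the image
  of every norm-bounded sequence has a subsequence converging in E^2(p,w).\<close>
definition compact_Ltil :: "ereal \<Rightarrow> ereal \<Rightarrow> (real \<Rightarrow> real) \<Rightarrow> (real \<Rightarrow> real) \<Rightarrow> real \<Rightarrow> bool" where
  "compact_Ltil a b p w x0 \<longleftrightarrow>
     (\<forall>f\<in>E2 a b p w x0. Ltil a b p w f \<in> E2 a b p w x0) \<and>
     (\<forall>F :: nat \<Rightarrow> real \<Rightarrow> real. (\<forall>n. F n \<in> E2 a b p w x0) \<and>
        (\<exists>B. \<forall>n. normsq_pw a b p w (F n) \<le> B) \<longrightarrow>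
        (\<exists>r g. strict_mono r \<and> g \<in> E2 a b p w x0 \<and>
           (\<lambda>n. normsq_pw a b p w (\<lambda>x. Ltil a b p w (F (r n)) x - g x)) \<longlonglongrightarrow> 0))"

end

theory Submission
  imports Defs
begin

text \<open>
  Hoeffding's identity Cov(F, G) = \<integral>\<integral> K(s, t) F'(s) G'(t) ds dt makes the covariance of
  primitives the quadratic form of L = L tilde: Cov(I f, I g) = \<langle>L f, g\<rangle> in L^2(pw).
  For g_n = L^n g_0 let V n = Var(I g_n) = \<langle>L g_n, g_n\<rangle> and N n = \<parallel>g_n\<parallel>^2.
  Since N (n+1) = Cov(I g_n, I g_(n+1)) = \<langle>g_(n+2), g_n\<rangle>, Cauchy-Schwarz gives
  N (n+1)^2 \<le> V n * V (n+1) and N (n+1)^2 \<le> N n * N (n+2). Schur's test with the positive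
  eigenfunction e_1 as test function gives V n \<le> \<kappa> * N n, and \<langle>g_n, e_1\<rangle> = \<kappa>^n \<langle>g_0, e_1\<rangle>
  gives N n \<ge> (\<kappa>^n \<langle>g_0, e_1\<rangle>)^2. Hence N (n+1) / N n increases to a limit that must be \<kappa>^2,
  and the bounds N (n+1) / (\<kappa> * N n) \<le> V n / N n \<le> \<kappa> give V n / N n \<longrightarrow> \<kappa>.
  No spectral decomposition of L is needed.
\<close>

section \<open>Products of integrals and the Cauchy-Schwarz inequality\<close>

lemma integrable_lborel_pair_product:
  fixes u v :: "real \<Rightarrow> real"
  assumes u: "integrable lborel u" and v: "integrable lborel v"
  shows "integrable (lborel \<Otimes>\<^sub>M lborel) (\<lambda>\<omega>. u (fst \<omega>) * v (snd \<omega>))"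
proof (rule lborel_pair.Fubini_integrable)
  have [measurable]: "u \<in> borel_measurable borel" "v \<in> borel_measurable borel"
    using u v by auto
  show "(\<lambda>\<omega>. u (fst \<omega>) * v (snd \<omega>)) \<in> borel_measurable (lborel \<Otimes>\<^sub>M lborel)"
    by measurable
  have "integrable lborel (\<lambda>x. \<bar>u x\<bar> * (\<integral>z. \<bar>v z\<bar> \<partial>lborel))"
    using u by (intro integrable_mult_left) auto
  then show "integrable lborel (\<lambda>x. \<integral>z. norm (u (fst (x, z)) * v (snd (x, z))) \<partial>lborel)"
    by (simp add: abs_mult)
  show "AE x in lborel. integrable lborel (\<lambda>z. u (fst (x, z)) * v (snd (x, z)))"
    using v by simp
qed

lemma integral_lborel_pair_product:
  fixes u v :: "real \<Rightarrow> real"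
  assumes "integrable lborel u" and "integrable lborel v"
  shows "(\<integral>\<omega>. u (fst \<omega>) * v (snd \<omega>) \<partial>(lborel \<Otimes>\<^sub>M lborel)) = integral\<^sup>L lborel u * integral\<^sup>L lborel v"
  using lborel_pair.integral_fst'[OF integrable_lborel_pair_product[OF assms]] by simp

lemma integrable_weighted_product:
  fixes u v r :: "'a \<Rightarrow> real"
  assumes [measurable]: "u \<in> borel_measurable M" "v \<in> borel_measurable M" "r \<in> borel_measurable M"
    and "integrable M (\<lambda>x. (u x)\<^sup>2 * r x)" and "integrable M (\<lambda>x. (v x)\<^sup>2 * r x)"
    and r: "AE x in M. 0 \<le> r x"
  shows "integrable M (\<lambda>x. u x * v x * r x)"
proof (rule Bochner_Integration.integrable_bound)
  show "integrable M (\<lambda>x. (u x)\<^sup>2 * r x + (v x)\<^sup>2 * r x)"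
    using assms by auto
  show "AE x in M. norm (u x * v x * r x) \<le> norm ((u x)\<^sup>2 * r x + (v x)\<^sup>2 * r x)"
    using r
  proof eventually_elim
    case (elim x)
    have "0 \<le> (u x - v x)\<^sup>2" "0 \<le> (u x + v x)\<^sup>2" by simp_all
    then have "\<bar>u x * v x\<bar> \<le> (u x)\<^sup>2 + (v x)\<^sup>2"
      by (simp add: abs_if power2_eq_square algebra_simps)
    from mult_right_mono[OF this elim] show ?case
      using elim by (simp add: abs_mult algebra_simps)
  qed
qed simp

lemma weighted_Cauchy_Schwarz:
  fixes u v r :: "'a \<Rightarrow> real"
  assumes [measurable]: "u \<in> borel_measurable M" "v \<in> borel_measurable M" "r \<in> borel_measurable M"
    and iu: "integrable M (\<lambda>x. (u x)\<^sup>2 * r x)" and iv: "integrable M (\<lambda>x. (v x)\<^sup>2 * r x)"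
    and r: "AE x in M. 0 \<le> r x"
  shows "(\<integral>x. u x * v x * r x \<partial>M)\<^sup>2 \<le> (\<integral>x. (u x)\<^sup>2 * r x \<partial>M) * (\<integral>x. (v x)\<^sup>2 * r x \<partial>M)"
proof -
  define A where "A = (\<integral>x. (u x)\<^sup>2 * r x \<partial>M)"
  define B where "B = (\<integral>x. (v x)\<^sup>2 * r x \<partial>M)"
  define C where "C = (\<integral>x. u x * v x * r x \<partial>M)"
  have iuv: "integrable M (\<lambda>x. u x * v x * r x)"
    by (rule integrable_weighted_product) (use assms in auto)
  have quadratic_nonneg: "0 \<le> A - 2 * l * C + l\<^sup>2 * B" for l
  proof -
    have "0 \<le> (\<integral>x. (u x - l * v x)\<^sup>2 * r x \<partial>M)"
      using r by (intro integral_nonneg_AE) (auto elim!: eventually_mono)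
    also have "\<dots> = (\<integral>x. (u x)\<^sup>2 * r x - (2 * l) * (u x * v x * r x) + l\<^sup>2 * ((v x)\<^sup>2 * r x) \<partial>M)"
      by (intro Bochner_Integration.integral_cong) (auto simp: power2_eq_square algebra_simps)
    also have "\<dots> = A - 2 * l * C + l\<^sup>2 * B"
      unfolding A_def B_def C_def using iu iv iuv by simp
    finally show ?thesis .
  qed
  have "0 \<le> B"
    unfolding B_def using r by (intro integral_nonneg_AE) (auto elim!: eventually_mono)
  show ?thesis
  proof (cases "B = 0")
    case True
    have "C = 0"
      using quadratic_nonneg[of "(A + 1) / (2 * C)"] True by (cases "C = 0") auto
    with True show ?thesis by (simp add: A_def B_def C_def)
  next
    case False
    with \<open>0 \<le> B\<close> have "0 < B" by simp
    have "A - 2 * (C / B) * C + (C / B)\<^sup>2 * B = A - C\<^sup>2 / B"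
      using \<open>0 < B\<close> by (simp add: power2_eq_square field_simps)
    with quadratic_nonneg[of "C / B"] have "0 \<le> A - C\<^sup>2 / B"
      by simp
    then have "C\<^sup>2 \<le> A * B"
      using \<open>0 < B\<close> by (simp add: field_simps)
    then show ?thesis by (simp add: A_def B_def C_def)
  qed
qed

section \<open>A ratio limit for power iterations\<close>

lemma base_le_of_power_bound:
  fixes d r L C :: real
  assumes "0 < d" and "0 < r" and "0 \<le> L" and bound: "\<And>n. d * r ^ n \<le> C * L ^ n"
  shows "r \<le> L"
proof (rule ccontr)
  assume "\<not> r \<le> L"
  then have lim: "(\<lambda>n. C * (L / r) ^ n) \<longlonglongrightarrow> C * 0"
    using \<open>0 < r\<close> \<open>0 \<le> L\<close> by (intro tendsto_mult tendsto_const LIMSEQ_power_zero) simp_all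
  have "d \<le> C * (L / r) ^ n" for n
    using bound[of n] \<open>0 < r\<close> by (simp add: power_divide field_simps)
  then have "d \<le> C * 0"
    by (intro LIMSEQ_le_const[OF lim]) auto
  with \<open>0 < d\<close> show False
    by simp
qed

lemma ratio_tendsto_of_log_convex:
  fixes N :: "nat \<Rightarrow> real" and k c :: real
  assumes "0 < k" and "c \<noteq> 0"
    and log_convex: "\<And>n. (N (Suc n))\<^sup>2 \<le> N n * N (Suc (Suc n))"
    and growth: "\<And>n. N (Suc n) \<le> k\<^sup>2 * N n"
    and lower: "\<And>n. (k ^ n * c)\<^sup>2 \<le> N n"
  shows "(\<lambda>n. N (Suc n) / N n) \<longlonglongrightarrow> k\<^sup>2"
proof -
  have N_pos: "0 < N n" for n
    using lower[of n] \<open>0 < k\<close> \<open>c \<noteq> 0\<close> by (smt (verit) zero_less_power2 power_not_zero mult_eq_0_iff)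
  define s where "s n = N (Suc n) / N n" for n
  have "incseq s"
  proof (rule incseq_SucI)
    fix n
    have "N (Suc n) * N (Suc n) \<le> N n * N (Suc (Suc n))"
      using log_convex[of n] by (simp add: power2_eq_square)
    then show "s n \<le> s (Suc n)"
      unfolding s_def using N_pos[of n] N_pos[of "Suc n"] by (simp add: divide_simps mult.commute)
  qed
  have s_le: "s n \<le> k\<^sup>2" for n
    unfolding s_def using growth[of n] N_pos[of n] by (simp add: divide_simps)
  then obtain L where sL: "s \<longlonglongrightarrow> L"
    using incseq_convergent[OF \<open>incseq s\<close>] by metis
  have s_le_L: "s n \<le> L" for n
    using incseq_le[OF \<open>incseq s\<close> sL] by simp
  have "0 < s 0"
    unfolding s_def using N_pos[of 0] N_pos[of 1] by simp
  with s_le_L[of 0] have "0 \<le> L"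
    by linarith
  have N_le: "N n \<le> N 0 * L ^ n" for n
  proof (induction n)
    case (Suc n)
    have "N (Suc n) = s n * N n"
      unfolding s_def using N_pos[of n] by simp
    also have "\<dots> \<le> L * (N 0 * L ^ n)"
      using s_le_L[of n] N_pos[of n] Suc \<open>0 \<le> L\<close> by (meson less_imp_le mult_mono)
    finally show ?case by (simp add: algebra_simps)
  qed simp
  have "k\<^sup>2 \<le> L"
  proof (rule base_le_of_power_bound)
    show "c\<^sup>2 * (k\<^sup>2) ^ n \<le> N 0 * L ^ n" for n
      using lower[of n] N_le[of n]
      by (simp add: power_mult_distrib power_even_eq[symmetric] power_mult[symmetric] mult.commute)
  qed (use \<open>0 < k\<close> \<open>c \<noteq> 0\<close> \<open>0 \<le> L\<close> in simp_all)
  moreover have "L \<le> k\<^sup>2"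
    using sL s_le by (intro LIMSEQ_le_const2) auto
  ultimately have "L = k\<^sup>2"
    by (rule antisym[rotated])
  with sL show ?thesis
    unfolding s_def by simp
qed

text \<open>Applied with V n = \<langle>L g_n, g_n\<rangle> and N n = \<parallel>g_n\<parallel>^2 for g_n = L^n g_0.\<close>

lemma power_iteration_ratio_tendsto:
  fixes N V :: "nat \<Rightarrow> real" and k c :: real
  assumes "0 \<le> k" and "c \<noteq> 0"
    and V_nonneg: "\<And>n. 0 \<le> V n" and V_le: "\<And>n. V n \<le> k * N n"
    and N_le_V: "\<And>n. (N (Suc n))\<^sup>2 \<le> V n * V (Suc n)"
    and log_convex: "\<And>n. (N (Suc n))\<^sup>2 \<le> N n * N (Suc (Suc n))"
    and lower: "\<And>n. (k ^ n * c)\<^sup>2 \<le> N n"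
  shows "(\<lambda>n. V n / N n) \<longlonglongrightarrow> k"
proof (cases "k = 0")
  case True
  then have "V n = 0" for n
    using V_nonneg V_le by (metis antisym mult_zero_left)
  with True show ?thesis by simp
next
  case False
  with \<open>0 \<le> k\<close> have "0 < k" by simp
  have N_pos: "0 < N n" for n
    using lower[of n] \<open>0 < k\<close> \<open>c \<noteq> 0\<close> by (smt (verit) zero_less_power2 power_not_zero mult_eq_0_iff)
  have N_Suc_le: "N (Suc n) \<le> k * V n" for n
  proof -
    have "(N (Suc n))\<^sup>2 \<le> V n * (k * N (Suc n))"
      using N_le_V[of n] mult_left_mono[OF V_le[of "Suc n"] V_nonneg[of n]] by (rule order_trans)
    then have "N (Suc n) * N (Suc n) \<le> (k * V n) * N (Suc n)"
      by (simp add: power2_eq_square mult_ac)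
    then show ?thesis using N_pos[of "Suc n"] by simp
  qed
  have "N (Suc n) \<le> k\<^sup>2 * N n" for n
    using order_trans[OF N_Suc_le mult_left_mono[OF V_le]] \<open>0 < k\<close>
    by (simp add: power2_eq_square mult.assoc)
  then have "(\<lambda>n. N (Suc n) / N n) \<longlonglongrightarrow> k\<^sup>2"
    by (rule ratio_tendsto_of_log_convex[OF \<open>0 < k\<close> \<open>c \<noteq> 0\<close> log_convex _ lower])
  then have "(\<lambda>n. N (Suc n) / N n / k) \<longlonglongrightarrow> k\<^sup>2 / k"
    using \<open>0 < k\<close> by (intro tendsto_divide tendsto_const) auto
  moreover have "k\<^sup>2 / k = k"
    by (simp add: power2_eq_square)
  ultimately have lim: "(\<lambda>n. N (Suc n) / N n / k) \<longlonglongrightarrow> k"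
    by (simp only:)
  have "N (Suc n) / N n / k \<le> V n / N n" "V n / N n \<le> k" for n
    using N_Suc_le[of n] V_le[of n] \<open>0 < k\<close> N_pos[of n] by (simp_all add: field_simps)
  then show ?thesis
    by (intro tendsto_sandwich[OF always_eventually always_eventually lim tendsto_const]) auto
qed

section \<open>Hoeffding's covariance identity\<close>

definition Covp :: "ereal \<Rightarrow> ereal \<Rightarrow> (real \<Rightarrow> real) \<Rightarrow> (real \<Rightarrow> real) \<Rightarrow> (real \<Rightarrow> real) \<Rightarrow> real"
  where "Covp a b p F G = Ep a b p (\<lambda>x. (F x - Ep a b p F) * (G x - Ep a b p G))"

definition crossing :: "real \<Rightarrow> real \<Rightarrow> real \<Rightarrow> real"
  where "crossing t x z = (if t < x then 1 else 0) - (if t < z then 1 else 0)"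

lemma crossing_measurable[measurable (raw)]:
  assumes [measurable]: "f \<in> borel_measurable M" "g \<in> borel_measurable M" "h \<in> borel_measurable M"
  shows "(\<lambda>\<omega>. crossing (f \<omega>) (g \<omega>) (h \<omega>)) \<in> borel_measurable M"
  unfolding crossing_def by measurable

lemma crossing_mult_nonneg: "0 \<le> crossing t x z * crossing s x z"
  by (simp add: crossing_def)

lemma L2_measurable: "L2 a b q f \<Longrightarrow> f \<in> borel_measurable borel"
  by (simp add: L2_def)

locale interval_density =
  fixes a b :: ereal and p :: "real \<Rightarrow> real" and x0 :: real
  assumes x0: "x0 \<in> Ivl a b" and dens: "prob_density a b p"
begin

abbreviation "S \<equiv> Ivl a b"
abbreviation "P \<equiv> cdf a b p"
abbreviation "K \<equiv> Kker a b p"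
abbreviation "Cov \<equiv> Covp a b p"

abbreviation \<rho> :: "real \<Rightarrow> real"
  where "\<rho> x \<equiv> indicator S x * p x"

lemma sets_S[measurable]: "S \<in> sets borel"
proof -
  have "S = ereal -` {a<..<b}"
    by (auto simp: Ivl_def)
  moreover have "open (ereal -` {a<..<b})"
    by (intro open_vimage continuous_on_ereal continuous_on_id) auto
  ultimately show ?thesis
    by simp
qed

lemma atLeastAtMost_subset_S:
  assumes "x \<in> S" "z \<in> S"
  shows "{x..z} \<subseteq> S"
proof
  fix t assume "t \<in> {x..z}"
  then have "ereal x \<le> ereal t" "ereal t \<le> ereal z"
    by auto
  moreover have "a < ereal x" "ereal z < b"
    using assms by (auto simp: Ivl_def)
  ultimately show "t \<in> S"
    unfolding Ivl_def by (metis (mono_tags) less_le_trans le_less_trans mem_Collect_eq)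
qed

lemma p_measurable[measurable]: "p \<in> borel_measurable borel"
  using dens by (simp add: prob_density_def)

lemma rho_nonneg: "0 \<le> \<rho> x"
  using dens by (simp add: prob_density_def indicator_def)

lemma integrable_rho: "integrable lborel \<rho>"
  using dens by (simp add: prob_density_def set_integrable_def)

lemma integral_rho: "integral\<^sup>L lborel \<rho> = 1"
  using dens by (simp add: prob_density_def set_lebesgue_integral_def)

lemma integrable_rho_bounded:
  assumes [measurable]: "h \<in> borel_measurable borel" and "\<And>x. \<bar>h x\<bar> \<le> 1"
  shows "integrable lborel (\<lambda>x. \<rho> x * h x)"
proof (rule Bochner_Integration.integrable_bound[OF integrable_rho])
  show "AE x in lborel. norm (\<rho> x * h x) \<le> norm (\<rho> x)"
    using assms(2) rho_nonneg by (auto simp: abs_mult intro!: mult_left_le)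
qed simp

lemma integral_rho_nonneg: "(\<And>x. 0 \<le> h x) \<Longrightarrow> 0 \<le> (\<integral>x. \<rho> x * h x \<partial>lborel)"
  by (intro integral_nonneg_AE) (auto intro!: mult_nonneg_nonneg rho_nonneg)

lemma Ep_eq_integral: "Ep a b p F = (\<integral>x. F x * \<rho> x \<partial>lborel)"
  by (simp add: Ep_def set_lebesgue_integral_def mult_ac)

lemma cdf_eq_integral: "P t = (\<integral>x. \<rho> x * (if x \<le> t then 1 else 0) \<partial>lborel)"
  unfolding cdf_def set_lebesgue_integral_def
  by (intro Bochner_Integration.integral_cong) (simp_all split: split_indicator)

lemma one_minus_cdf_eq_integral: "1 - P t = (\<integral>x. \<rho> x * (if t < x then 1 else 0) \<partial>lborel)"
proof -
  have "1 = (\<integral>x. \<rho> x * (if x \<le> t then 1 else 0) + \<rho> x * (if t < x then 1 else 0) \<partial>lborel)"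
    by (subst integral_rho[symmetric], intro Bochner_Integration.integral_cong) auto
  also have "\<dots> = P t + (\<integral>x. \<rho> x * (if t < x then 1 else 0) \<partial>lborel)"
    unfolding cdf_eq_integral by (intro Bochner_Integration.integral_add integrable_rho_bounded) auto
  finally show ?thesis
    by simp
qed

lemma cdf_nonneg: "0 \<le> P t"
  unfolding cdf_eq_integral by (rule integral_rho_nonneg) simp

lemma cdf_le_1: "P t \<le> 1"
proof -
  have "0 \<le> (\<integral>x. \<rho> x * (if t < x then 1 else 0) \<partial>lborel)"
    by (rule integral_rho_nonneg) simp
  then show ?thesis
    using one_minus_cdf_eq_integral[of t] by linarith
qed

lemma cdf_mono: "t \<le> t' \<Longrightarrow> P t \<le> P t'"
  unfolding cdf_eq_integral
  by (intro integral_mono integrable_rho_bounded) (auto intro!: mult_left_mono rho_nonneg)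

lemma cdf_measurable[measurable]: "P \<in> borel_measurable borel"
  by (rule borel_measurable_mono) (auto simp: mono_def cdf_mono)

lemma Kker_sym: "K x y = K y x"
  by (simp add: Kker_def min.commute max.commute)

lemma Kker_measurable[measurable]: "(\<lambda>(x, y). K x y) \<in> borel_measurable (lborel \<Otimes>\<^sub>M lborel)"
  unfolding Kker_def by measurable

lemma Kker_nonneg: "0 \<le> K x y"
  unfolding Kker_def using cdf_nonneg cdf_le_1 by simp

lemma Kker_le_cdf_min: "K x y \<le> P (min x y)"
  unfolding Kker_def using cdf_nonneg cdf_le_1 by (simp add: mult_left_le)

lemma Kker_le_one_minus_cdf_max: "K x y \<le> 1 - P (max x y)"
  unfolding Kker_def using cdf_nonneg cdf_le_1 by (simp add: mult_left_le_one_le)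

lemma L2_bounded:
  assumes [measurable]: "h \<in> borel_measurable borel" and "\<And>x. \<bar>h x\<bar> \<le> 1"
  shows "L2 a b p h"
proof -
  have "\<bar>(h x)\<^sup>2\<bar> \<le> 1" for x
    using assms(2)[of x] by (simp add: abs_square_le_1)
  then have "integrable lborel (\<lambda>x. \<rho> x * (h x)\<^sup>2)"
    by (intro integrable_rho_bounded) auto
  then show ?thesis
    by (simp add: L2_def set_integrable_def mult_ac)
qed

lemma L2_integrable_sq: "L2 a b p F \<Longrightarrow> integrable lborel (\<lambda>x. (F x)\<^sup>2 * \<rho> x)"
  by (simp add: L2_def set_integrable_def mult_ac)

lemma integrable_L2_product:
  assumes "L2 a b p F" and "L2 a b p G"
  shows "integrable lborel (\<lambda>x. F x * G x * \<rho> x)"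
  using assms L2_measurable L2_integrable_sq rho_nonneg
  by (intro integrable_weighted_product) auto

lemma integrable_L2: "L2 a b p F \<Longrightarrow> integrable lborel (\<lambda>x. F x * \<rho> x)"
  using integrable_L2_product[of F "\<lambda>x. 1"] L2_bounded[of "\<lambda>x. 1"] by simp

lemma Covp_sym: "Cov F G = Cov G F"
  by (simp add: Covp_def mult.commute)

lemma Covp_nonneg: "0 \<le> Cov F F"
  unfolding Covp_def Ep_eq_integral
  by (intro integral_nonneg_AE AE_I2) (simp add: rho_nonneg)

lemma Covp_eq:
  assumes F: "L2 a b p F" and G: "L2 a b p G"
  shows "Cov F G = (\<integral>x. F x * G x * \<rho> x \<partial>lborel) - Ep a b p F * Ep a b p G"
proof -
  define EF where "EF = Ep a b p F"
  define EG where "EG = Ep a b p G"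
  have "Cov F G = (\<integral>x. F x * G x * \<rho> x - EG * (F x * \<rho> x) - EF * (G x * \<rho> x) + EF * EG * \<rho> x \<partial>lborel)"
    unfolding Covp_def Ep_eq_integral EF_def EG_def
    by (intro Bochner_Integration.integral_cong) (auto simp: algebra_simps)
  also have "\<dots> = (\<integral>x. F x * G x * \<rho> x \<partial>lborel) - EG * EF - EF * EG + EF * EG"
    using integrable_L2_product[OF F G] integrable_L2[OF F] integrable_L2[OF G] integrable_rho
    by (simp add: integral_rho EF_def EG_def Ep_eq_integral)
  finally show ?thesis
    by (simp add: EF_def EG_def)
qed

lemma Covp_Cauchy_Schwarz:
  assumes F: "L2 a b p F" and G: "L2 a b p G"
  shows "(Cov F G)\<^sup>2 \<le> Cov F F * Cov G G"
proof -
  have shifted: "L2 a b p (\<lambda>x. H x - c)" if "L2 a b p H" for H c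
  proof -
    have "integrable lborel (\<lambda>x. (H x)\<^sup>2 * \<rho> x - 2 * c * (H x * \<rho> x) + c\<^sup>2 * \<rho> x)"
      using L2_integrable_sq[OF that] integrable_L2[OF that] integrable_rho by auto
    then have "integrable lborel (\<lambda>x. (H x - c)\<^sup>2 * \<rho> x)"
      by (rule back_subst[of "integrable lborel"]) (auto simp: fun_eq_iff power2_eq_square algebra_simps)
    then show ?thesis
      using L2_measurable[OF that] by (simp add: L2_def set_integrable_def mult_ac)
  qed
  show ?thesis
    using weighted_Cauchy_Schwarz[of "\<lambda>x. F x - Ep a b p F" lborel "\<lambda>x. G x - Ep a b p G" \<rho>]
      L2_measurable[OF F] L2_measurable[OF G]
      L2_integrable_sq[OF shifted[OF F]] L2_integrable_sq[OF shifted[OF G]] rho_nonneg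
    by (simp add: Covp_def Ep_eq_integral power2_eq_square)
qed

lemma Covp_upper_steps: "Cov (\<lambda>x. if t < x then 1 else 0) (\<lambda>x. if s < x then 1 else 0) = K t s"
proof -
  have Ep_step: "Ep a b p (\<lambda>x. if u < x then 1 else 0) = 1 - P u" for u
    by (simp add: Ep_eq_integral one_minus_cdf_eq_integral mult.commute)
  have "(\<integral>x. (if t < x then 1 else 0) * (if s < x then 1 else 0) * \<rho> x \<partial>lborel) = 1 - P (max t s)"
    unfolding one_minus_cdf_eq_integral by (intro Bochner_Integration.integral_cong) auto
  then have "Cov (\<lambda>x. if t < x then 1 else 0) (\<lambda>x. if s < x then 1 else 0)
      = (1 - P (max t s)) - (1 - P t) * (1 - P s)"
    by (subst Covp_eq) (auto intro!: L2_bounded simp: Ep_step)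
  also have "\<dots> = K t s"
    by (cases "t \<le> s") (auto simp: Kker_def max_def min_def algebra_simps)
  finally show ?thesis .
qed

lemma double_integral_increments:
  assumes F: "L2 a b p F" and G: "L2 a b p G"
  defines "D \<equiv> \<lambda>\<omega>. \<rho> (fst \<omega>) * \<rho> (snd \<omega>) * ((F (fst \<omega>) - F (snd \<omega>)) * (G (fst \<omega>) - G (snd \<omega>)))"
  shows "integrable (lborel \<Otimes>\<^sub>M lborel) D" and "integral\<^sup>L (lborel \<Otimes>\<^sub>M lborel) D = 2 * Cov F G"
proof -
  define u where "u x = F x * G x * \<rho> x" for x
  define f where "f x = F x * \<rho> x" for x
  define g where "g x = G x * \<rho> x" for x
  have ints: "integrable lborel u" "integrable lborel f" "integrable lborel g" "integrable lborel \<rho>"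
    unfolding u_def f_def g_def
    using integrable_L2_product[OF F G] integrable_L2[OF F] integrable_L2[OF G] integrable_rho by auto
  have i: "integrable (lborel \<Otimes>\<^sub>M lborel) (\<lambda>\<omega>. u (fst \<omega>) * \<rho> (snd \<omega>))"
    "integrable (lborel \<Otimes>\<^sub>M lborel) (\<lambda>\<omega>. \<rho> (fst \<omega>) * u (snd \<omega>))"
    "integrable (lborel \<Otimes>\<^sub>M lborel) (\<lambda>\<omega>. f (fst \<omega>) * g (snd \<omega>))"
    "integrable (lborel \<Otimes>\<^sub>M lborel) (\<lambda>\<omega>. g (fst \<omega>) * f (snd \<omega>))"
    using ints by (auto intro!: integrable_lborel_pair_product simp del: indicator_simps)
  have D_eq: "D = (\<lambda>\<omega>. u (fst \<omega>) * \<rho> (snd \<omega>) + \<rho> (fst \<omega>) * u (snd \<omega>)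
      - f (fst \<omega>) * g (snd \<omega>) - g (fst \<omega>) * f (snd \<omega>))"
    by (auto simp: D_def u_def f_def g_def fun_eq_iff algebra_simps)
  show "integrable (lborel \<Otimes>\<^sub>M lborel) D"
    unfolding D_eq using i by auto
  have "integral\<^sup>L (lborel \<Otimes>\<^sub>M lborel) D = integral\<^sup>L lborel u * 1 + 1 * integral\<^sup>L lborel u
      - integral\<^sup>L lborel f * integral\<^sup>L lborel g - integral\<^sup>L lborel g * integral\<^sup>L lborel f"
    unfolding D_eq using i
    by (simp add: integral_lborel_pair_product[OF ints(1,4)] integral_lborel_pair_product[OF ints(4,1)]
        integral_lborel_pair_product[OF ints(2,3)] integral_lborel_pair_product[OF ints(3,2)]
        integral_rho del: indicator_simps)
  also have "\<dots> = 2 * Cov F G"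
    by (simp add: Covp_eq[OF F G] Ep_eq_integral u_def[abs_def] f_def[abs_def] g_def[abs_def])
  finally show "integral\<^sup>L (lborel \<Otimes>\<^sub>M lborel) D = 2 * Cov F G" .
qed

lemma double_integral_crossing:
  fixes t s :: real
  defines "D \<equiv> \<lambda>\<omega>. \<rho> (fst \<omega>) * \<rho> (snd \<omega>) * (crossing t (fst \<omega>) (snd \<omega>) * crossing s (fst \<omega>) (snd \<omega>))"
  shows "integrable (lborel \<Otimes>\<^sub>M lborel) D" and "integral\<^sup>L (lborel \<Otimes>\<^sub>M lborel) D = 2 * K t s"
  using double_integral_increments[OF L2_bounded L2_bounded, of "\<lambda>x. if t < x then 1 else 0" "\<lambda>x. if s < x then 1 else 0"]
  by (simp_all add: D_def crossing_def Covp_upper_steps)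

lemma loc_int_on_S: "loc_int a b f \<Longrightarrow> c \<in> S \<Longrightarrow> d \<in> S \<Longrightarrow> set_integrable lborel {c..d} f"
  by (auto simp: loc_int_def Ivl_def)

lemma prim_diff_eq_interval_integral:
  assumes f: "loc_int a b f" and x: "x \<in> S" and z: "z \<in> S"
  shows "prim x0 f x - prim x0 f z = (LBINT t=ereal z..ereal x. f t)"
proof -
  define m where "m = min z (min x0 x)"
  define M where "M = max z (max x0 x)"
  have "m \<in> S" "M \<in> S" "m \<le> M"
    using x z x0 by (auto simp: m_def M_def min_def max_def)
  then have "set_integrable lborel {m<..<M} f"
    by (intro set_integrable_subset[OF loc_int_on_S[OF f \<open>m \<in> S\<close> \<open>M \<in> S\<close>]]) auto
  moreover have "einterval (ereal m) (ereal M) = {m<..<M}"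
    by (auto simp: einterval_def)
  ultimately have "interval_lebesgue_integrable lborel (ereal m) (ereal M) f"
    using \<open>m \<le> M\<close> by (simp add: interval_lebesgue_integrable_def)
  moreover have "ereal m = min (ereal z) (min (ereal x0) (ereal x))"
    "ereal M = max (ereal z) (max (ereal x0) (ereal x))"
    by (auto simp: m_def M_def min_def max_def)
  ultimately have "(LBINT t=ereal z..ereal x0. f t) + (LBINT t=ereal x0..ereal x. f t) = (LBINT t=ereal z..ereal x. f t)"
    by (intro interval_integral_sum) simp
  moreover have "prim x0 f z = - (LBINT t=ereal z..ereal x0. f t)"
    unfolding prim_def by (rule interval_integral_endpoints_reverse)
  ultimately show ?thesis
    unfolding prim_def by simp
qed

lemma prim_diff_eq_integral_crossing:
  assumes f: "loc_int a b f" and x: "x \<in> S" and z: "z \<in> S"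
  shows "integrable lborel (\<lambda>t. indicator S t * f t * crossing t x z)"
    and "prim x0 f x - prim x0 f z = (\<integral>t. indicator S t * f t * crossing t x z \<partial>lborel)"
proof -
  have ordered: "integrable lborel (\<lambda>t. indicator {u..<v} t * f t)
       \<and> (LBINT t=u..v. f t) = (\<integral>t. indicator {u..<v} t * f t \<partial>lborel)"
    if "u \<in> S" "v \<in> S" "u \<le> v" for u v
  proof
    have "set_integrable lborel {u..<v} f"
      by (rule set_integrable_subset[OF loc_int_on_S[OF f that(1,2)]]) auto
    then show "integrable lborel (\<lambda>t. indicator {u..<v} t * f t)"
      by (simp add: set_integrable_def)
    show "(LBINT t=u..v. f t) = (\<integral>t. indicator {u..<v} t * f t \<partial>lborel)"
      using that by (simp add: interval_integral_Ico set_lebesgue_integral_def)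
  qed
  have "integrable lborel (\<lambda>t. indicator S t * f t * crossing t x z)
     \<and> (LBINT t=z..x. f t) = (\<integral>t. indicator S t * f t * crossing t x z \<partial>lborel)"
  proof (cases "z \<le> x")
    case True
    then have "indicator S t * f t * crossing t x z = indicator {z..<x} t * f t" for t
      using atLeastAtMost_subset_S[OF z x] by (auto simp: crossing_def indicator_def subset_iff)
    with ordered[OF z x True] show ?thesis
      by (simp only:)
  next
    case False
    then have eq: "indicator S t * f t * crossing t x z = - (indicator {x..<z} t * f t)" for t
      using atLeastAtMost_subset_S[OF x z] by (auto simp: crossing_def indicator_def subset_iff)
    have "(LBINT t=z..x. f t) = - (LBINT t=x..z. f t)"
      by (rule interval_integral_endpoints_reverse)
    with ordered[OF x z] False show ?thesis
      by (simp add: eq)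
  qed
  then show "integrable lborel (\<lambda>t. indicator S t * f t * crossing t x z)"
    "prim x0 f x - prim x0 f z = (\<integral>t. indicator S t * f t * crossing t x z \<partial>lborel)"
    using prim_diff_eq_interval_integral[OF assms] by auto
qed

abbreviation kernel_integrand :: "(real \<Rightarrow> real) \<Rightarrow> (real \<Rightarrow> real) \<Rightarrow> real \<times> real \<Rightarrow> real"
  where "kernel_integrand f g \<omega> \<equiv>
    indicator S (fst \<omega>) * indicator S (snd \<omega>) * K (fst \<omega>) (snd \<omega>) * f (fst \<omega>) * g (snd \<omega>)"

text \<open>
  Integrating out (x, z) leaves 2 K(t, s) f(t) g(s); integrating out (t, s) leaves
  \<rho>(x) \<rho>(z) (F x - F z) (G x - G z), whose integral is 2 Cov(F, G). Fubini yields Hoeffding's identity.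
\<close>

definition Hoeffding_integrand :: "(real \<Rightarrow> real) \<Rightarrow> (real \<Rightarrow> real) \<Rightarrow> real \<times> real \<Rightarrow> real \<times> real \<Rightarrow> real"
  where "Hoeffding_integrand f g xz ts =
    \<rho> (fst xz) * \<rho> (snd xz) * (crossing (fst ts) (fst xz) (snd xz) * crossing (snd ts) (fst xz) (snd xz))
    * (indicator S (fst ts) * f (fst ts) * (indicator S (snd ts) * g (snd ts)))"

lemma Hoeffding_integrand_measurable[measurable]:
  assumes [measurable]: "f \<in> borel_measurable borel" "g \<in> borel_measurable borel"
  shows "(\<lambda>\<omega>. Hoeffding_integrand f g (fst \<omega>) (snd \<omega>))
    \<in> borel_measurable ((lborel \<Otimes>\<^sub>M lborel) \<Otimes>\<^sub>M (lborel \<Otimes>\<^sub>M lborel))"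
  unfolding Hoeffding_integrand_def by measurable

lemma integral_Hoeffding_integrand_pair:
  "(\<integral>xz. Hoeffding_integrand f g xz ts \<partial>(lborel \<Otimes>\<^sub>M lborel)) = 2 * kernel_integrand f g ts"
proof -
  have "(\<integral>xz. Hoeffding_integrand f g xz ts \<partial>(lborel \<Otimes>\<^sub>M lborel))
    = (\<integral>xz. \<rho> (fst xz) * \<rho> (snd xz) * (crossing (fst ts) (fst xz) (snd xz) * crossing (snd ts) (fst xz) (snd xz))
        \<partial>(lborel \<Otimes>\<^sub>M lborel)) * (indicator S (fst ts) * f (fst ts) * (indicator S (snd ts) * g (snd ts)))"
    unfolding Hoeffding_integrand_def by (rule integral_mult_left_zero)
  also have "\<dots> = 2 * K (fst ts) (snd ts) * (indicator S (fst ts) * f (fst ts) * (indicator S (snd ts) * g (snd ts)))"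
    by (simp only: double_integral_crossing(2))
  finally show ?thesis
    by (simp add: mult_ac)
qed

lemma integral_Hoeffding_integrand_kernel:
  assumes f: "loc_int a b f" and g: "loc_int a b g"
  shows "(\<integral>ts. Hoeffding_integrand f g xz ts \<partial>(lborel \<Otimes>\<^sub>M lborel)) = \<rho> (fst xz) * \<rho> (snd xz)
    * ((prim x0 f (fst xz) - prim x0 f (snd xz)) * (prim x0 g (fst xz) - prim x0 g (snd xz)))"
proof (cases "fst xz \<in> S \<and> snd xz \<in> S")
  case True
  obtain x z where xz: "xz = (x, z)"
    by fastforce
  with True have "x \<in> S" "z \<in> S"
    by auto
  note Df = prim_diff_eq_integral_crossing[OF f \<open>x \<in> S\<close> \<open>z \<in> S\<close>]
  note Dg = prim_diff_eq_integral_crossing[OF g \<open>x \<in> S\<close> \<open>z \<in> S\<close>]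
  have "(\<integral>ts. Hoeffding_integrand f g xz ts \<partial>(lborel \<Otimes>\<^sub>M lborel)) = (\<integral>ts. \<rho> x * \<rho> z
      * ((indicator S (fst ts) * f (fst ts) * crossing (fst ts) x z)
        * (indicator S (snd ts) * g (snd ts) * crossing (snd ts) x z)) \<partial>(lborel \<Otimes>\<^sub>M lborel))"
    unfolding Hoeffding_integrand_def xz by (intro Bochner_Integration.integral_cong) (auto simp: mult_ac)
  also have "\<dots> = \<rho> x * \<rho> z * ((prim x0 f x - prim x0 f z) * (prim x0 g x - prim x0 g z))"
    using integral_lborel_pair_product[OF Df(1) Dg(1)] by (simp add: Df(2) Dg(2))
  finally show ?thesis
    by (simp add: xz)
next
  case False
  then show ?thesis
    by (auto simp: Hoeffding_integrand_def)
qed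

lemma integrable_Hoeffding_integrand:
  assumes [measurable]: "f \<in> borel_measurable borel" "g \<in> borel_measurable borel"
    and int: "integrable (lborel \<Otimes>\<^sub>M lborel) (kernel_integrand f g)"
  shows "integrable ((lborel \<Otimes>\<^sub>M lborel) \<Otimes>\<^sub>M (lborel \<Otimes>\<^sub>M lborel)) (case_prod (Hoeffding_integrand f g))"
proof (rule integrableI_bounded)
  interpret Q: pair_sigma_finite "lborel \<Otimes>\<^sub>M lborel :: (real \<times> real) measure" "lborel \<Otimes>\<^sub>M lborel :: (real \<times> real) measure"
    unfolding lborel_prod by (rule lborel_pair.pair_sigma_finite_axioms)
  show "case_prod (Hoeffding_integrand f g) \<in> borel_measurable ((lborel \<Otimes>\<^sub>M lborel) \<Otimes>\<^sub>M (lborel \<Otimes>\<^sub>M lborel))"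
    using Hoeffding_integrand_measurable[of f g] by (simp add: case_prod_beta')
  have inner: "(\<integral>\<^sup>+ xz. ennreal \<bar>Hoeffding_integrand f g xz ts\<bar> \<partial>(lborel \<Otimes>\<^sub>M lborel))
      = ennreal (2 * \<bar>kernel_integrand f g ts\<bar>)" for ts
  proof -
    define D where "D xz = \<rho> (fst xz) * \<rho> (snd xz)
      * (crossing (fst ts) (fst xz) (snd xz) * crossing (snd ts) (fst xz) (snd xz))" for xz
    define c where "c = indicator S (fst ts) * f (fst ts) * (indicator S (snd ts) * g (snd ts))"
    have D_nonneg: "0 \<le> D xz" for xz
      unfolding D_def by (intro mult_nonneg_nonneg rho_nonneg crossing_mult_nonneg)
    have "Hoeffding_integrand f g xz ts = D xz * c" for xz
      unfolding Hoeffding_integrand_def D_def c_def ..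
    then have "(\<integral>\<^sup>+ xz. ennreal \<bar>Hoeffding_integrand f g xz ts\<bar> \<partial>(lborel \<Otimes>\<^sub>M lborel))
        = (\<integral>\<^sup>+ xz. ennreal (D xz) * ennreal \<bar>c\<bar> \<partial>(lborel \<Otimes>\<^sub>M lborel))"
      using D_nonneg by (intro nn_integral_cong) (simp add: abs_mult ennreal_mult)
    also have "\<dots> = (\<integral>\<^sup>+ xz. ennreal (D xz) \<partial>(lborel \<Otimes>\<^sub>M lborel)) * ennreal \<bar>c\<bar>"
      by (rule nn_integral_multc) (simp add: D_def)
    also have "(\<integral>\<^sup>+ xz. ennreal (D xz) \<partial>(lborel \<Otimes>\<^sub>M lborel)) = ennreal (2 * K (fst ts) (snd ts))"
      using double_integral_crossing[of "fst ts" "snd ts"] D_nonneg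
      by (subst nn_integral_eq_integral) (auto simp: D_def[abs_def])
    finally show ?thesis
      using Kker_nonneg by (simp add: c_def abs_mult ennreal_mult[symmetric] mult_ac)
  qed
  have "(\<integral>\<^sup>+ \<omega>. ennreal (norm (case_prod (Hoeffding_integrand f g) \<omega>)) \<partial>((lborel \<Otimes>\<^sub>M lborel) \<Otimes>\<^sub>M (lborel \<Otimes>\<^sub>M lborel)))
     = (\<integral>\<^sup>+ ts. (\<integral>\<^sup>+ xz. ennreal \<bar>Hoeffding_integrand f g xz ts\<bar> \<partial>(lborel \<Otimes>\<^sub>M lborel)) \<partial>(lborel \<Otimes>\<^sub>M lborel))"
    by (subst Q.nn_integral_snd[symmetric]) (auto simp: case_prod_beta')
  also have "\<dots> = 2 * (\<integral>\<^sup>+ ts. ennreal (norm (kernel_integrand f g ts)) \<partial>(lborel \<Otimes>\<^sub>M lborel))"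
    unfolding inner by (subst nn_integral_cmult[symmetric]) (auto intro!: nn_integral_cong simp: ennreal_mult')
  also have "\<dots> < \<infinity>"
    using int by (simp add: integrable_iff_bounded ennreal_mult_less_top)
  finally show "(\<integral>\<^sup>+ \<omega>. ennreal (norm (case_prod (Hoeffding_integrand f g) \<omega>))
      \<partial>((lborel \<Otimes>\<^sub>M lborel) \<Otimes>\<^sub>M (lborel \<Otimes>\<^sub>M lborel))) < \<infinity>" .
qed

theorem Hoeffding_covariance:
  assumes f: "loc_int a b f" and g: "loc_int a b g"
    and F: "L2 a b p (prim x0 f)" and G: "L2 a b p (prim x0 g)"
    and int: "integrable (lborel \<Otimes>\<^sub>M lborel) (kernel_integrand f g)"
  shows "Cov (prim x0 f) (prim x0 g) = integral\<^sup>L (lborel \<Otimes>\<^sub>M lborel) (kernel_integrand f g)"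
proof -
  interpret Q: pair_sigma_finite "lborel \<Otimes>\<^sub>M lborel :: (real \<times> real) measure" "lborel \<Otimes>\<^sub>M lborel :: (real \<times> real) measure"
    unfolding lborel_prod by (rule lborel_pair.pair_sigma_finite_axioms)
  have [measurable]: "f \<in> borel_measurable borel" "g \<in> borel_measurable borel"
    using f g by (simp_all add: loc_int_def)
  have "2 * integral\<^sup>L (lborel \<Otimes>\<^sub>M lborel) (kernel_integrand f g)
      = (\<integral>ts. (\<integral>xz. Hoeffding_integrand f g xz ts \<partial>(lborel \<Otimes>\<^sub>M lborel)) \<partial>(lborel \<Otimes>\<^sub>M lborel))"
    by (simp add: integral_Hoeffding_integrand_pair)
  also have "\<dots> = (\<integral>xz. (\<integral>ts. Hoeffding_integrand f g xz ts \<partial>(lborel \<Otimes>\<^sub>M lborel)) \<partial>(lborel \<Otimes>\<^sub>M lborel))"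
    by (rule Q.Fubini_integral[OF integrable_Hoeffding_integrand[OF _ _ int]]) measurable
  also have "\<dots> = 2 * Cov (prim x0 f) (prim x0 g)"
    using double_integral_increments(2)[OF F G] by (simp add: integral_Hoeffding_integrand_kernel[OF f g])
  finally show ?thesis
    by simp
qed

lemma Kker_le_integral_crossing: "K x y \<le> (\<integral>z. \<rho> z * \<bar>crossing x y z\<bar> \<partial>lborel)"
proof (cases "x < y")
  case True
  then have "(\<integral>z. \<rho> z * \<bar>crossing x y z\<bar> \<partial>lborel) = P x"
    unfolding cdf_eq_integral by (intro Bochner_Integration.integral_cong) (auto simp: crossing_def)
  with Kker_le_cdf_min[of x y] True show ?thesis
    by simp
next
  case False
  then have "(\<integral>z. \<rho> z * \<bar>crossing x y z\<bar> \<partial>lborel) = 1 - P x"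
    unfolding one_minus_cdf_eq_integral by (intro Bochner_Integration.integral_cong) (auto simp: crossing_def)
  with Kker_le_one_minus_cdf_max[of x y] False show ?thesis
    by (simp add: max_def)
qed

lemma Kker_le_nn_integral_crossing:
  assumes "0 \<le> c"
  shows "ennreal (c * K x y) \<le> (\<integral>\<^sup>+ z. ennreal (c * \<bar>crossing x y z\<bar> * \<rho> z) \<partial>lborel)"
proof -
  have int: "integrable lborel (\<lambda>z. \<rho> z * \<bar>crossing x y z\<bar>)"
    by (rule integrable_rho_bounded) (auto simp: crossing_def)
  have "c * K x y \<le> c * (\<integral>z. \<rho> z * \<bar>crossing x y z\<bar> \<partial>lborel)"
    using mult_left_mono[OF Kker_le_integral_crossing \<open>0 \<le> c\<close>] .
  also have "\<dots> = (\<integral>z. c * \<bar>crossing x y z\<bar> * \<rho> z \<partial>lborel)"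
    unfolding integral_mult_right_zero[symmetric]
    by (intro Bochner_Integration.integral_cong) (simp_all add: mult_ac)
  finally have "ennreal (c * K x y) \<le> ennreal (\<integral>z. c * \<bar>crossing x y z\<bar> * \<rho> z \<partial>lborel)"
    by (rule ennreal_leI)
  also have "\<dots> = (\<integral>\<^sup>+ z. ennreal (c * \<bar>crossing x y z\<bar> * \<rho> z) \<partial>lborel)"
  proof (rule nn_integral_eq_integral[symmetric])
    show "integrable lborel (\<lambda>z. c * \<bar>crossing x y z\<bar> * \<rho> z)"
      using integrable_mult_right[OF int, of c] by (simp add: mult_ac)
    show "AE z in lborel. 0 \<le> c * \<bar>crossing x y z\<bar> * \<rho> z"
      by (intro AE_I2 mult_nonneg_nonneg[OF mult_nonneg_nonneg[OF \<open>0 \<le> c\<close> abs_ge_zero] rho_nonneg])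
  qed
  finally show ?thesis .
qed

lemma nn_integral_crossing:
  assumes f: "loc_int a b f" and f_nonneg: "AE x in lborel. x \<in> S \<longrightarrow> 0 \<le> f x"
    and y: "y \<in> S" and z: "z \<in> S"
  shows "(\<integral>\<^sup>+ x. ennreal (indicator S x * f x * \<bar>crossing x y z\<bar>) \<partial>lborel) = ennreal \<bar>prim x0 f y - prim x0 f z\<bar>"
proof -
  note prim_diff = prim_diff_eq_integral_crossing[OF f y z]
  define \<sigma> where "\<sigma> = (if z \<le> y then 1 else -1 :: real)"
  have eq: "indicator S x * f x * \<bar>crossing x y z\<bar> = \<sigma> * (indicator S x * f x * crossing x y z)" for x
    by (auto simp: \<sigma>_def crossing_def)
  have nonneg: "AE x in lborel. 0 \<le> indicator S x * f x * \<bar>crossing x y z\<bar>"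
    using f_nonneg by eventually_elim (simp add: indicator_def)
  have "(\<integral>\<^sup>+ x. ennreal (indicator S x * f x * \<bar>crossing x y z\<bar>) \<partial>lborel)
      = ennreal (\<integral>x. indicator S x * f x * \<bar>crossing x y z\<bar> \<partial>lborel)"
    using prim_diff(1) nonneg by (intro nn_integral_eq_integral) (simp_all add: eq)
  moreover have "(\<integral>x. indicator S x * f x * \<bar>crossing x y z\<bar> \<partial>lborel) = \<sigma> * (prim x0 f y - prim x0 f z)"
    by (simp add: eq prim_diff(2))
  moreover have "0 \<le> (\<integral>x. indicator S x * f x * \<bar>crossing x y z\<bar> \<partial>lborel)"
    using nonneg by (rule integral_nonneg_AE)
  ultimately show ?thesis
    by (auto simp: \<sigma>_def split: if_splits)
qed

lemma nn_integral_crossing_rho: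
  assumes f: "loc_int a b f" and f_nonneg: "AE x in lborel. x \<in> S \<longrightarrow> 0 \<le> f x" and y: "y \<in> S"
  shows "(\<integral>\<^sup>+ x. ennreal (indicator S x * f x * \<bar>crossing x y z\<bar> * \<rho> z) \<partial>lborel)
    = ennreal (norm ((prim x0 f y - prim x0 f z) * \<rho> z))"
proof (cases "z \<in> S")
  case True
  have [measurable]: "f \<in> borel_measurable borel"
    using f by (simp add: loc_int_def)
  have "(\<integral>\<^sup>+ x. ennreal (indicator S x * f x * \<bar>crossing x y z\<bar> * \<rho> z) \<partial>lborel)
      = (\<integral>\<^sup>+ x. ennreal (indicator S x * f x * \<bar>crossing x y z\<bar>) \<partial>lborel) * ennreal (\<rho> z)"
    using rho_nonneg by (simp add: ennreal_mult'' nn_integral_multc)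
  also have "\<dots> = ennreal \<bar>prim x0 f y - prim x0 f z\<bar> * ennreal (\<rho> z)"
    by (simp only: nn_integral_crossing[OF f f_nonneg y True])
  also have "\<dots> = ennreal (norm ((prim x0 f y - prim x0 f z) * \<rho> z))"
    unfolding real_norm_def abs_mult[of _ "\<rho> z"] abs_of_nonneg[OF rho_nonneg]
    by (rule ennreal_mult[OF abs_ge_zero rho_nonneg, symmetric])
  finally show ?thesis .
qed simp

lemma nn_integral_Kker_finite:
  assumes f: "loc_int a b f" and F: "L2 a b p (prim x0 f)"
    and f_nonneg: "AE x in lborel. x \<in> S \<longrightarrow> 0 \<le> f x" and y: "y \<in> S"
  shows "(\<integral>\<^sup>+ x. ennreal (indicator S x * K x y * f x) \<partial>lborel) < \<infinity>"
proof -
  have [measurable]: "f \<in> borel_measurable borel" "prim x0 f \<in> borel_measurable borel"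
    using f F by (simp_all add: loc_int_def L2_def)
  have "(\<integral>\<^sup>+ x. ennreal (indicator S x * K x y * f x) \<partial>lborel)
      \<le> (\<integral>\<^sup>+ x. (\<integral>\<^sup>+ z. ennreal (indicator S x * f x * \<bar>crossing x y z\<bar> * \<rho> z) \<partial>lborel) \<partial>lborel)"
    using f_nonneg
    by (intro nn_integral_mono_AE, eventually_elim)
      (use Kker_le_nn_integral_crossing[of "indicator S x * f x" for x] in \<open>simp add: indicator_def mult_ac\<close>)
  also have "\<dots> = (\<integral>\<^sup>+ z. (\<integral>\<^sup>+ x. ennreal (indicator S x * f x * \<bar>crossing x y z\<bar> * \<rho> z) \<partial>lborel) \<partial>lborel)"
    by (rule lborel_pair.Fubini'[symmetric]) measurable
  also have "\<dots> = (\<integral>\<^sup>+ z. ennreal (norm ((prim x0 f y - prim x0 f z) * \<rho> z)) \<partial>lborel)"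
    by (simp only: nn_integral_crossing_rho[OF f f_nonneg y])
  also have "\<dots> < \<infinity>"
  proof -
    have "integrable lborel (\<lambda>z. prim x0 f y * \<rho> z - prim x0 f z * \<rho> z)"
      using integrable_L2[OF F] integrable_rho by (intro Bochner_Integration.integrable_diff integrable_mult_right)
    then have "integrable lborel (\<lambda>z. (prim x0 f y - prim x0 f z) * \<rho> z)"
      by (simp only: left_diff_distrib)
    then show ?thesis
      unfolding integrable_iff_bounded by (rule conjunct2)
  qed
  finally show ?thesis .
qed

lemma Varp_centered: "L2 a b p F \<Longrightarrow> Varp a b p (\<lambda>x. F x - Ep a b p F) = Cov F F"
proof -
  assume F: "L2 a b p F"
  have "Ep a b p (\<lambda>x. F x - Ep a b p F) = Ep a b p F - Ep a b p F * 1"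
    using integrable_L2[OF F] integrable_rho
    by (simp add: Ep_eq_integral left_diff_distrib integral_rho del: indicator_simps)
  then show ?thesis
    by (simp add: Varp_def Covp_def power2_eq_square)
qed

end

section \<open>Schur's test\<close>

definition inner_pw :: "ereal \<Rightarrow> ereal \<Rightarrow> (real \<Rightarrow> real) \<Rightarrow> (real \<Rightarrow> real)
    \<Rightarrow> (real \<Rightarrow> real) \<Rightarrow> (real \<Rightarrow> real) \<Rightarrow> real"
  where "inner_pw a b p w f g = (LINT x:Ivl a b|lborel. f x * g x * (p x * w x))"

locale weighted_density = interval_density +
  fixes w :: "real \<Rightarrow> real"
  assumes wt: "weight a b p w"
begin

abbreviation \<mu> :: "real \<Rightarrow> real"
  where "\<mu> x \<equiv> indicator S x * (p x * w x)"

abbreviation "normsq \<equiv> normsq_pw a b p w"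
abbreviation "inner_w \<equiv> inner_pw a b p w"

lemma w_measurable[measurable]: "w \<in> borel_measurable borel"
  using wt by (simp add: weight_def loc_int_def)

lemma AE_pw_pos: "AE x in lborel. x \<in> S \<longrightarrow> 0 < p x * w x"
proof -
  have "AE x in lborel. x \<in> S \<longrightarrow> 0 < p x" "AE x in lborel. x \<in> S \<longrightarrow> 0 < w x"
    using dens wt by (simp_all add: prob_density_def weight_def)
  then show ?thesis
    by eventually_elim simp
qed

lemma AE_mu_nonneg: "AE x in lborel. 0 \<le> \<mu> x"
  using AE_pw_pos by eventually_elim (simp add: indicator_def less_imp_le)

lemma normsq_pw_eq_integral: "normsq f = (\<integral>x. (f x)\<^sup>2 * \<mu> x \<partial>lborel)"
  by (simp add: normsq_pw_def set_lebesgue_integral_def mult_ac)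

lemma inner_pw_eq_integral: "inner_w f g = (\<integral>x. f x * g x * \<mu> x \<partial>lborel)"
  by (simp add: inner_pw_def set_lebesgue_integral_def mult_ac)

lemma normsq_pw_eq_inner: "normsq f = inner_w f f"
  by (simp add: normsq_pw_eq_integral inner_pw_eq_integral power2_eq_square)

lemma inner_pw_sym: "inner_w f g = inner_w g f"
  by (simp add: inner_pw_eq_integral mult.commute)

lemma normsq_pw_nonneg: "0 \<le> normsq f"
  unfolding normsq_pw_eq_integral using AE_mu_nonneg
  by (intro integral_nonneg_AE) (auto elim!: eventually_mono)

lemma Ep_sq_w_eq_normsq: "Ep a b p (\<lambda>x. \<bar>h x\<bar>\<^sup>2 * w x) = normsq h"
  by (simp add: Ep_eq_integral normsq_pw_eq_integral mult_ac)

lemma Ep_w_eq_inner: "Ep a b p (\<lambda>x. g x * h x * w x) = inner_w g h"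
  by (simp add: Ep_eq_integral inner_pw_eq_integral mult_ac)

lemma L2_pw_integrable_sq: "L2 a b (\<lambda>x. p x * w x) h \<Longrightarrow> integrable lborel (\<lambda>x. (h x)\<^sup>2 * \<mu> x)"
  by (simp add: L2_def set_integrable_def mult_ac)

lemma inner_pw_Cauchy_Schwarz:
  assumes "L2 a b (\<lambda>x. p x * w x) u" and "L2 a b (\<lambda>x. p x * w x) v"
  shows "(inner_w u v)\<^sup>2 \<le> normsq u * normsq v"
  unfolding inner_pw_eq_integral normsq_pw_eq_integral
  using assms L2_measurable L2_pw_integrable_sq AE_mu_nonneg
  by (intro weighted_Cauchy_Schwarz) auto

lemma Schur_pointwise:
  assumes "t \<in> S \<Longrightarrow> 0 < e t" and "s \<in> S \<Longrightarrow> 0 < e s"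
  shows "ennreal (norm (kernel_integrand f g (t, s)))
    \<le> ennreal (1/2 * indicator S t * (f t)\<^sup>2 / e t * (indicator S s * K s t * e s))
     + ennreal (1/2 * indicator S s * (g s)\<^sup>2 / e s * (indicator S t * K t s * e t))"
proof (cases "t \<in> S \<and> s \<in> S")
  case True
  with assms have "0 < e t" "0 < e s"
    by auto
  have "\<bar>f t\<bar> * \<bar>g s\<bar> \<le> 1/2 * (f t)\<^sup>2 * e s / e t + 1/2 * (g s)\<^sup>2 * e t / e s"
  proof -
    have "1/2 * (f t)\<^sup>2 * e s / e t + 1/2 * (g s)\<^sup>2 * e t / e s - \<bar>f t\<bar> * \<bar>g s\<bar>
        = (\<bar>f t\<bar> * e s - \<bar>g s\<bar> * e t)\<^sup>2 / (2 * e t * e s)"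
      using \<open>0 < e t\<close> \<open>0 < e s\<close> by (simp add: field_simps power2_eq_square)
    moreover have "0 \<le> (\<bar>f t\<bar> * e s - \<bar>g s\<bar> * e t)\<^sup>2 / (2 * e t * e s)"
      using \<open>0 < e t\<close> \<open>0 < e s\<close> by simp
    ultimately show ?thesis
      by linarith
  qed
  from mult_left_mono[OF this Kker_nonneg[of t s]]
  have "norm (kernel_integrand f g (t, s))
      \<le> 1/2 * indicator S t * (f t)\<^sup>2 / e t * (indicator S s * K s t * e s)
       + 1/2 * indicator S s * (g s)\<^sup>2 / e s * (indicator S t * K t s * e t)"
    using True Kker_nonneg[of t s] Kker_sym[of s t] by (simp add: abs_mult algebra_simps)
  then have "ennreal (norm (kernel_integrand f g (t, s)))
      \<le> ennreal (1/2 * indicator S t * (f t)\<^sup>2 / e t * (indicator S s * K s t * e s)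
       + 1/2 * indicator S s * (g s)\<^sup>2 / e s * (indicator S t * K t s * e t))"
    by (rule ennreal_leI)
  also have "\<dots> = ennreal (1/2 * indicator S t * (f t)\<^sup>2 / e t * (indicator S s * K s t * e s))
     + ennreal (1/2 * indicator S s * (g s)\<^sup>2 / e s * (indicator S t * K t s * e t))"
    using True \<open>0 < e t\<close> \<open>0 < e s\<close> Kker_nonneg[of t s] Kker_nonneg[of s t]
    by (intro ennreal_plus) auto
  finally show ?thesis .
qed auto

lemma nn_integral_Schur_half:
  assumes [measurable]: "e \<in> borel_measurable borel" and e_pos: "AE x in lborel. x \<in> S \<longrightarrow> 0 < e x"
    and "0 \<le> k"
    and eigen: "AE y in lborel. y \<in> S \<longrightarrow>
      (\<integral>\<^sup>+ x. ennreal (indicator S x * K x y * e x) \<partial>lborel) = ennreal (k * e y * (p y * w y))"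
    and h: "L2 a b (\<lambda>x. p x * w x) h"
  shows "(\<integral>\<^sup>+ t. (\<integral>\<^sup>+ s. ennreal (1/2 * indicator S t * (h t)\<^sup>2 / e t * (indicator S s * K s t * e s))
    \<partial>lborel) \<partial>lborel) = ennreal (k / 2 * normsq h)"
proof -
  have [measurable]: "h \<in> borel_measurable borel"
    using h by (rule L2_measurable)
  have "(\<integral>\<^sup>+ t. (\<integral>\<^sup>+ s. ennreal (1/2 * indicator S t * (h t)\<^sup>2 / e t * (indicator S s * K s t * e s))
      \<partial>lborel) \<partial>lborel) = (\<integral>\<^sup>+ t. ennreal (k / 2 * ((h t)\<^sup>2 * \<mu> t)) \<partial>lborel)"
  proof (intro nn_integral_cong_AE)
    show "AE t in lborel. (\<integral>\<^sup>+ s. ennreal (1/2 * indicator S t * (h t)\<^sup>2 / e t * (indicator S s * K s t * e s))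
        \<partial>lborel) = ennreal (k / 2 * ((h t)\<^sup>2 * \<mu> t))"
      using e_pos eigen AE_pw_pos
    proof eventually_elim
      case (elim t)
      show ?case
      proof (cases "t \<in> S")
        case True
        define c where "c = 1/2 * indicator S t * (h t)\<^sup>2 / e t"
        have "0 \<le> c"
          using True elim by (simp add: c_def)
        have "(\<integral>\<^sup>+ s. ennreal (c * (indicator S s * K s t * e s)) \<partial>lborel)
            = ennreal c * (\<integral>\<^sup>+ s. ennreal (indicator S s * K s t * e s) \<partial>lborel)"
          using \<open>0 \<le> c\<close> by (simp add: ennreal_mult' nn_integral_cmult)
        also have "\<dots> = ennreal (c * (k * e t * (p t * w t)))"
          using elim True \<open>0 \<le> c\<close> by (simp add: ennreal_mult')
        also have "c * (k * e t * (p t * w t)) = k / 2 * ((h t)\<^sup>2 * \<mu> t)"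
          using elim True by (simp add: c_def field_simps)
        finally show ?thesis
          by (simp add: c_def)
      qed simp
    qed
  qed
  also have "\<dots> = ennreal (\<integral>t. k / 2 * ((h t)\<^sup>2 * \<mu> t) \<partial>lborel)"
    using L2_pw_integrable_sq[OF h] AE_mu_nonneg \<open>0 \<le> k\<close>
    by (intro nn_integral_eq_integral) (auto elim!: eventually_mono)
  also have "\<dots> = ennreal (k / 2 * normsq h)"
    by (simp add: normsq_pw_eq_integral)
  finally show ?thesis .
qed

theorem Schur_test:
  assumes [measurable]: "e \<in> borel_measurable borel" and e_pos: "AE x in lborel. x \<in> S \<longrightarrow> 0 < e x"
    and "0 \<le> k"
    and eigen: "AE y in lborel. y \<in> S \<longrightarrow>
      (\<integral>\<^sup>+ x. ennreal (indicator S x * K x y * e x) \<partial>lborel) = ennreal (k * e y * (p y * w y))"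
    and f: "L2 a b (\<lambda>x. p x * w x) f" and g: "L2 a b (\<lambda>x. p x * w x) g"
  shows "(\<integral>\<^sup>+ \<omega>. ennreal (norm (kernel_integrand f g \<omega>)) \<partial>(lborel \<Otimes>\<^sub>M lborel))
    \<le> ennreal (k / 2 * normsq f) + ennreal (k / 2 * normsq g)"
proof -
  have [measurable]: "f \<in> borel_measurable borel" "g \<in> borel_measurable borel"
    using f g by (simp_all add: L2_measurable)
  define Y where "Y h t s = ennreal (1/2 * indicator S t * (h t)\<^sup>2 / e t * (indicator S s * K s t * e s))"
    for h :: "real \<Rightarrow> real" and t s
  have "(\<integral>\<^sup>+ \<omega>. ennreal (norm (kernel_integrand f g \<omega>)) \<partial>(lborel \<Otimes>\<^sub>M lborel))
      = (\<integral>\<^sup>+ t. (\<integral>\<^sup>+ s. ennreal (norm (kernel_integrand f g (t, s))) \<partial>lborel) \<partial>lborel)"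
    using lborel.nn_integral_fst[of "\<lambda>\<omega>. ennreal (norm (kernel_integrand f g \<omega>))" lborel] by simp
  also have "\<dots> \<le> (\<integral>\<^sup>+ t. (\<integral>\<^sup>+ s. Y f t s + Y g s t \<partial>lborel) \<partial>lborel)"
    using e_pos
  proof (intro nn_integral_mono_AE, eventually_elim)
    case (elim t)
    note e_t = elim
    show ?case
      using e_pos
    proof (intro nn_integral_mono_AE, eventually_elim)
      case (elim s)
      show ?case
        unfolding Y_def by (rule Schur_pointwise) (use e_t elim in auto)
    qed
  qed
  also have "\<dots> = (\<integral>\<^sup>+ t. (\<integral>\<^sup>+ s. Y f t s \<partial>lborel) \<partial>lborel) + (\<integral>\<^sup>+ t. (\<integral>\<^sup>+ s. Y g s t \<partial>lborel) \<partial>lborel)"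
  proof -
    have "(\<integral>\<^sup>+ t. (\<integral>\<^sup>+ s. Y f t s + Y g s t \<partial>lborel) \<partial>lborel)
        = (\<integral>\<^sup>+ t. (\<integral>\<^sup>+ s. Y f t s \<partial>lborel) + (\<integral>\<^sup>+ s. Y g s t \<partial>lborel) \<partial>lborel)"
      by (intro nn_integral_cong nn_integral_add) (simp_all add: Y_def)
    then show ?thesis
      by (simp add: nn_integral_add Y_def)
  qed
  also have "(\<integral>\<^sup>+ t. (\<integral>\<^sup>+ s. Y g s t \<partial>lborel) \<partial>lborel) = (\<integral>\<^sup>+ s. (\<integral>\<^sup>+ t. Y g s t \<partial>lborel) \<partial>lborel)"
    by (rule lborel_pair.Fubini'[symmetric]) (simp add: Y_def)
  finally show ?thesis
    using nn_integral_Schur_half[OF _ e_pos \<open>0 \<le> k\<close> eigen f] nn_integral_Schur_half[OF _ e_pos \<open>0 \<le> k\<close> eigen g]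
    by (simp add: Y_def)
qed

lemma Ltil_mult_pw:
  assumes "p y * w y \<noteq> 0"
  shows "Ltil a b p w f y * (p y * w y) = (\<integral>x. indicator S x * K x y * f x \<partial>lborel)"
  using assms unfolding Ltil_def set_lebesgue_integral_def by (simp add: Kker_sym[of y] mult_ac)

end

section \<open>Power iteration of L tilde\<close>

locale principal_eigenpair = weighted_density +
  fixes e1 :: "real \<Rightarrow> real"
  assumes hyp1: "H1 a b p w" and cpt: "compact_Ltil a b p w x0"
    and e1_E2: "e1 \<in> E2 a b p w x0"
    and e1_eig: "AE x in lborel. x \<in> Ivl a b \<longrightarrow> Ltil a b p w e1 x = Cpw a b p w * e1 x"
    and e1_pos: "AE x in lborel. x \<in> Ivl a b \<longrightarrow> 0 < e1 x"
begin

abbreviation "\<kappa> \<equiv> Cpw a b p w"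
abbreviation "Lt \<equiv> Ltil a b p w"
abbreviation "E \<equiv> E2 a b p w x0"

lemma kappa_nonneg: "0 \<le> \<kappa>"
  using hyp1 unfolding Cpw_def H1_def by (intro cInf_greatest) (auto simp: poincare_consts_def)

lemma E2D:
  assumes "f \<in> E"
  shows "L2 a b (\<lambda>x. p x * w x) f" and "loc_int a b f" and "L2 a b p (prim x0 f)"
  using assms by (auto simp: E2_def)

lemma E2_measurable: "f \<in> E \<Longrightarrow> f \<in> borel_measurable borel"
  using E2D(1) L2_measurable by blast

lemma e1_measurable[measurable]: "e1 \<in> borel_measurable borel"
  by (rule E2_measurable[OF e1_E2])

lemma Ltil_E2: "f \<in> E \<Longrightarrow> Lt f \<in> E"
  using cpt by (simp add: compact_Ltil_def)

lemma funpow_Ltil_E2: "g \<in> E \<Longrightarrow> (Lt ^^ n) g \<in> E"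
  by (induction n) (auto intro: Ltil_E2)

text \<open>
  Ltil is a Bochner integral, hence 0 for a non-integrable kernel; nn_integral_Kker_finite rules this
  out, so the eigen-equation also holds for the nonnegative integral.
\<close>

lemma e1_eigen_nn_integral:
  "AE y in lborel. y \<in> S \<longrightarrow>
    (\<integral>\<^sup>+ x. ennreal (indicator S x * K x y * e1 x) \<partial>lborel) = ennreal (\<kappa> * e1 y * (p y * w y))"
  using e1_eig AE_pw_pos
proof eventually_elim
  case (elim y)
  show ?case
  proof
    assume y: "y \<in> S"
    have e1_nonneg: "AE x in lborel. x \<in> S \<longrightarrow> 0 \<le> e1 x"
      using e1_pos by eventually_elim auto
    have nonneg: "AE x in lborel. 0 \<le> indicator S x * K x y * e1 x"
      using e1_nonneg by eventually_elim (simp add: indicator_def Kker_nonneg)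
    have "integrable lborel (\<lambda>x. indicator S x * K x y * e1 x)"
      using nn_integral_Kker_finite[OF E2D(2,3)[OF e1_E2] e1_nonneg y] nonneg
      by (intro integrableI_nonneg) auto
    then have "(\<integral>\<^sup>+ x. ennreal (indicator S x * K x y * e1 x) \<partial>lborel)
        = ennreal (\<integral>x. indicator S x * K x y * e1 x \<partial>lborel)"
      using nonneg by (rule nn_integral_eq_integral)
    also have "(\<integral>x. indicator S x * K x y * e1 x \<partial>lborel) = Lt e1 y * (p y * w y)"
      using elim y by (intro Ltil_mult_pw[symmetric]) auto
    finally show "(\<integral>\<^sup>+ x. ennreal (indicator S x * K x y * e1 x) \<partial>lborel) = ennreal (\<kappa> * e1 y * (p y * w y))"
      using elim y by simp
  qed
qed

lemma nn_integral_kernel_integrand_le: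
  assumes "f \<in> E" and "g \<in> E"
  shows "(\<integral>\<^sup>+ \<omega>. ennreal (norm (kernel_integrand f g \<omega>)) \<partial>(lborel \<Otimes>\<^sub>M lborel))
    \<le> ennreal (\<kappa> / 2 * normsq f) + ennreal (\<kappa> / 2 * normsq g)"
  using e1_pos kappa_nonneg e1_eigen_nn_integral E2D(1)[OF assms(1)] E2D(1)[OF assms(2)]
  by (rule Schur_test[OF e1_measurable])

lemma integrable_kernel_integrand:
  assumes "f \<in> E" and "g \<in> E"
  shows "integrable (lborel \<Otimes>\<^sub>M lborel) (kernel_integrand f g)"
proof (rule integrableI_bounded)
  have [measurable]: "f \<in> borel_measurable borel" "g \<in> borel_measurable borel"
    using assms by (simp_all add: E2_measurable)
  show "kernel_integrand f g \<in> borel_measurable (lborel \<Otimes>\<^sub>M lborel)"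
    by measurable
  show "(\<integral>\<^sup>+ \<omega>. ennreal (norm (kernel_integrand f g \<omega>)) \<partial>(lborel \<Otimes>\<^sub>M lborel)) < \<infinity>"
    using nn_integral_kernel_integrand_le[OF assms] by (rule le_less_trans) simp
qed

lemma inner_Ltil_eq_Covp:
  assumes f: "f \<in> E" and g: "g \<in> E"
  shows "inner_w (Lt f) g = Cov (prim x0 f) (prim x0 g)"
proof -
  have [measurable]: "f \<in> borel_measurable borel" "g \<in> borel_measurable borel" "Lt f \<in> borel_measurable borel"
    using f g Ltil_E2[OF f] by (simp_all add: E2_measurable)
  have "integrable (lborel \<Otimes>\<^sub>M lborel) (\<lambda>(t, s). indicator S t * indicator S s * K t s * f t * g s)"
    using integrable_kernel_integrand[OF f g] by (simp add: case_prod_beta')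
  from lborel_pair.integral_snd[OF this]
  have "integral\<^sup>L (lborel \<Otimes>\<^sub>M lborel) (kernel_integrand f g)
      = (\<integral>s. (\<integral>t. indicator S t * indicator S s * K t s * f t * g s \<partial>lborel) \<partial>lborel)"
    by (simp add: case_prod_beta')
  also have "\<dots> = (\<integral>s. (\<integral>t. indicator S t * K t s * f t \<partial>lborel) * (indicator S s * g s) \<partial>lborel)"
    by (intro Bochner_Integration.integral_cong refl, subst integral_mult_left_zero[symmetric])
      (intro Bochner_Integration.integral_cong, auto simp: mult_ac)
  also have "\<dots> = inner_w (Lt f) g"
    unfolding inner_pw_eq_integral
  proof (intro integral_cong_AE)
    show "AE s in lborel. (\<integral>t. indicator S t * K t s * f t \<partial>lborel) * (indicator S s * g s) = Lt f s * g s * \<mu> s"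
      using AE_pw_pos
    proof eventually_elim
      case (elim s)
      show ?case
      proof (cases "s \<in> S")
        case True
        with elim have "p s * w s \<noteq> 0"
          by (metis less_irrefl)
        from Ltil_mult_pw[OF this, of f] True show ?thesis
          by (simp add: mult_ac)
      qed simp
    qed
  qed measurable
  finally show ?thesis
    using Hoeffding_covariance[OF E2D(2)[OF f] E2D(2)[OF g] E2D(3)[OF f] E2D(3)[OF g] integrable_kernel_integrand[OF f g]]
    by simp
qed

lemma Covp_prim_le:
  assumes f: "f \<in> E"
  shows "Cov (prim x0 f) (prim x0 f) \<le> \<kappa> * normsq f"
proof -
  have "ennreal (norm (integral\<^sup>L (lborel \<Otimes>\<^sub>M lborel) (kernel_integrand f f)))
      \<le> (\<integral>\<^sup>+ \<omega>. ennreal (norm (kernel_integrand f f \<omega>)) \<partial>(lborel \<Otimes>\<^sub>M lborel))"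
    by (rule integral_norm_bound_ennreal[OF integrable_kernel_integrand[OF f f]])
  also have "\<dots> \<le> ennreal (\<kappa> / 2 * normsq f) + ennreal (\<kappa> / 2 * normsq f)"
    by (rule nn_integral_kernel_integrand_le[OF f f])
  also have "\<dots> = ennreal (\<kappa> * normsq f)"
    using kappa_nonneg normsq_pw_nonneg[of f] by (simp add: ennreal_plus[symmetric])
  finally have "norm (integral\<^sup>L (lborel \<Otimes>\<^sub>M lborel) (kernel_integrand f f)) \<le> \<kappa> * normsq f"
    using kappa_nonneg normsq_pw_nonneg[of f] by (simp add: ennreal_le_iff)
  then show ?thesis
    using Hoeffding_covariance[OF E2D(2)[OF f] E2D(2)[OF f] E2D(3)[OF f] E2D(3)[OF f] integrable_kernel_integrand[OF f f]]
    by simp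
qed

lemma inner_Ltil_e1:
  assumes "h \<in> E"
  shows "inner_w (Lt e1) h = \<kappa> * inner_w e1 h"
proof -
  have [measurable]: "h \<in> borel_measurable borel" "Lt e1 \<in> borel_measurable borel"
    using assms Ltil_E2[OF e1_E2] by (simp_all add: E2_measurable)
  have "inner_w (Lt e1) h = (\<integral>x. \<kappa> * (e1 x * h x * \<mu> x) \<partial>lborel)"
    unfolding inner_pw_eq_integral
    by (intro integral_cong_AE) (use e1_eig in \<open>auto elim!: eventually_mono simp: indicator_def\<close>)
  then show ?thesis
    by (simp add: inner_pw_eq_integral)
qed

lemma inner_funpow_Ltil_e1:
  assumes g: "g \<in> E"
  shows "inner_w ((Lt ^^ n) g) e1 = \<kappa> ^ n * inner_w g e1"
proof (induction n)
  case (Suc n)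
  have gn: "(Lt ^^ n) g \<in> E"
    by (rule funpow_Ltil_E2[OF g])
  have "inner_w ((Lt ^^ Suc n) g) e1 = inner_w (Lt e1) ((Lt ^^ n) g)"
    using inner_Ltil_eq_Covp[OF gn e1_E2] inner_Ltil_eq_Covp[OF e1_E2 gn] Covp_sym by simp
  also have "\<dots> = \<kappa> * inner_w ((Lt ^^ n) g) e1"
    by (simp add: inner_Ltil_e1[OF gn] inner_pw_sym)
  finally show ?case
    using Suc by simp
qed simp

lemma Covp_prim_funpow_ratio_tendsto:
  assumes g0: "g0 \<in> E" and e1_norm: "normsq e1 = 1" and g0_e1: "inner_w g0 e1 \<noteq> 0"
  shows "(\<lambda>n. Cov (prim x0 ((Lt ^^ n) g0)) (prim x0 ((Lt ^^ n) g0)) / normsq ((Lt ^^ n) g0)) \<longlonglongrightarrow> \<kappa>"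
proof -
  define g where "g n = (Lt ^^ n) g0" for n
  have gE: "g n \<in> E" for n
    unfolding g_def by (rule funpow_Ltil_E2[OF g0])
  have g_Suc: "g (Suc n) = Lt (g n)" for n
    by (simp add: g_def)
  define N where "N n = normsq (g n)" for n
  define V where "V n = Cov (prim x0 (g n)) (prim x0 (g n))" for n
  have N_Suc: "N (Suc n) = Cov (prim x0 (g n)) (prim x0 (g (Suc n)))" for n
    unfolding N_def normsq_pw_eq_inner g_Suc by (rule inner_Ltil_eq_Covp[OF gE Ltil_E2[OF gE]])
  have "(\<lambda>n. V n / N n) \<longlonglongrightarrow> \<kappa>"
  proof (rule power_iteration_ratio_tendsto[OF kappa_nonneg g0_e1])
    show "0 \<le> V n" for n
      unfolding V_def by (rule Covp_nonneg)
    show "V n \<le> \<kappa> * N n" for n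
      unfolding V_def N_def by (rule Covp_prim_le[OF gE])
    show "(N (Suc n))\<^sup>2 \<le> V n * V (Suc n)" for n
      unfolding N_Suc V_def by (rule Covp_Cauchy_Schwarz[OF E2D(3)[OF gE] E2D(3)[OF gE]])
    show "(N (Suc n))\<^sup>2 \<le> N n * N (Suc (Suc n))" for n
    proof -
      have "N (Suc n) = Cov (prim x0 (g (Suc n))) (prim x0 (g n))"
        by (simp add: N_Suc Covp_sym)
      also have "\<dots> = inner_w (g (Suc (Suc n))) (g n)"
        unfolding g_Suc[of "Suc n"] by (rule inner_Ltil_eq_Covp[OF gE gE, symmetric])
      finally have "N (Suc n) = inner_w (g (Suc (Suc n))) (g n)" .
      with inner_pw_Cauchy_Schwarz[OF E2D(1)[OF gE] E2D(1)[OF gE], of "Suc (Suc n)" n] show ?thesis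
        by (simp add: N_def mult.commute)
    qed
    show "(\<kappa> ^ n * inner_w g0 e1)\<^sup>2 \<le> N n" for n
      using inner_pw_Cauchy_Schwarz[OF E2D(1)[OF gE] E2D(1)[OF e1_E2], of n]
      by (simp add: N_def g_def inner_funpow_Ltil_e1[OF g0] e1_norm)
  qed
  then show ?thesis
    by (simp add: V_def N_def g_def)
qed

end

theorem proposition3p5:
  fixes a b :: ereal and p w e1 g0 :: "real \<Rightarrow> real" and x0 :: real
  assumes ab: "a < b"
    and x0: "x0 \<in> Ivl a b"
    and dens: "prob_density a b p"
    and wt: "weight a b p w"
    and hyp1: "H1 a b p w"
    and hyp2: "H2 a b p w"
    and cpt: "compact_Ltil a b p w x0"
    and e1_E2: "e1 \<in> E2 a b p w x0"
    and e1_eig: "AE x in lborel. x \<in> Ivl a b \<longrightarrow> Ltil a b p w e1 x = Cpw a b p w * e1 x"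
    and e1_norm: "normsq_pw a b p w e1 = 1"
    and e1_pos: "AE x in lborel. x \<in> Ivl a b \<longrightarrow> 0 < e1 x"
    and g0: "g0 \<in> E2 a b p w x0"
    and g0_e1: "Ep a b p (\<lambda>x. g0 x * e1 x * w x) \<noteq> 0"
  shows "(\<lambda>n. Varp a b p (Iop a b p x0 ((Ltil a b p w ^^ n) g0))
              / Ep a b p (\<lambda>x. \<bar>(Ltil a b p w ^^ n) g0 x\<bar>\<^sup>2 * w x))
         \<longlonglongrightarrow> Cpw a b p w"
proof -
  interpret principal_eigenpair a b p x0 w e1
    by unfold_locales (fact x0 dens wt hyp1 cpt e1_E2 e1_eig e1_pos)+
  have "Varp a b p (Iop a b p x0 ((Lt ^^ n) g0)) = Cov (prim x0 ((Lt ^^ n) g0)) (prim x0 ((Lt ^^ n) g0))" for n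
    unfolding Iop_def[abs_def] by (rule Varp_centered[OF E2D(3)[OF funpow_Ltil_E2[OF g0]]])
  moreover have "inner_w g0 e1 \<noteq> 0"
    using g0_e1 by (simp add: Ep_w_eq_inner)
  ultimately show ?thesis
    unfolding Ep_sq_w_eq_normsq using Covp_prim_funpow_ratio_tendsto[OF g0 e1_norm] by simp
qed

end
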